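(* For any two local decompositions $\Gamma_1,\Gamma_2$ (on the same bipartite system), $\phi(\Gamma_1\cdot\Gamma_2)\le\phi(\Gamma_1)\phi(\Gamma_2)$.
   Context: A local decomposition is a finite set $\Gamma=\{(c_i,V_i\otimes W_i):i\in[m]\}$ with $c_i\in\mathbb{R}$, $V_i\in\mathsf{U}(\mathcal{H}_A)$, $W_i\in\mathsf{U}(\mathcal{H}_B)$. Its magnitude is $\phi(\Gamma)=2\|c\|_1^2-\|c\|_2^2$, viewing $c=(c_i)_{i\in[m]}\in\mathbb{R}^m$. The product of $\Gamma_1=\{(a_i,V^{(1)}_i\otimes W^{(1)}_i):i\in[m_1]\}$ and $\Gamma_2=\{(b_j,V^{(2)}_j\otimes W^{(2)}_j):j\in[m_2]\}$ is $\Gamma_1\cdot\Gamma_2=\{(a_ib_j,V^{(1)}_iV^{(2)}_j\otimes W^{(1)}_iW^{(2)}_j):(i,j)\in[m_1]\times[m_2]\}$, with coefficient vector $(a_ib_j)_{(i,j)}$. *)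

theory Defs
  imports "HOL-Analysis.Analysis"
begin

text \<open>Finite-dimensional Hilbert spaces H_A = complex^'a, H_B = complex^'b;
operators are square complex matrices.\<close>

definition cadjoint :: "complex^'n^'n \<Rightarrow> complex^'n^'n" where
  "cadjoint U = (\<chi> i j. cnj (U $ j $ i))"

definition unitary_mat :: "complex^'n^'n \<Rightarrow> bool" where
  "unitary_mat U \<longleftrightarrow> U ** cadjoint U = mat 1 \<and> cadjoint U ** U = mat 1"

text \<open>A local decomposition indexed by [m]: list of (c_i, V_i, W_i), term c_i V_i \<otimes> W_i.\<close>
type_synonym ('a,'b) local_decomp = "(real \<times> (complex^'a^'a) \<times> (complex^'b^'b)) list"

definition local_decomposition :: "('a::finite,'b::finite) local_decomp \<Rightarrow> bool" where
  "local_decomposition \<Gamma> \<longleftrightarrow> (\<forall>(c,V,W) \<in> set \<Gamma>. unitary_mat V \<and> unitary_mat W)"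

definition coeffs :: "('a::finite,'b::finite) local_decomp \<Rightarrow> real list" where
  "coeffs \<Gamma> = map fst \<Gamma>"

definition magnitude :: "('a::finite,'b::finite) local_decomp \<Rightarrow> real" where
  "magnitude \<Gamma> = 2 * (\<Sum>c\<leftarrow>coeffs \<Gamma>. \<bar>c\<bar>)^2 - (\<Sum>c\<leftarrow>coeffs \<Gamma>. c^2)"

definition decomp_prod :: "('a::finite,'b::finite) local_decomp \<Rightarrow> ('a,'b) local_decomp \<Rightarrow> ('a,'b) local_decomp" where
  "decomp_prod \<Gamma>1 \<Gamma>2 = concat (map (\<lambda>(a,V1,W1). map (\<lambda>(b,V2,W2). (a*b, V1 ** V2, W1 ** W2)) \<Gamma>2) \<Gamma>1)"

end

theory Submission
  imports Defs
begin

text \<open>The coefficients of a product decomposition are all products \<open>a * b\<close>, so every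
multiplicative statistic of the coefficients (here \<open>\<bar>c\<bar>\<close> and \<open>c\<^sup>2\<close>) factorises, giving
\<open>\<parallel>c\<parallel>\<^sub>1 = \<parallel>a\<parallel>\<^sub>1 \<parallel>b\<parallel>\<^sub>1\<close> and \<open>\<parallel>c\<parallel>\<^sub>2\<^sup>2 = \<parallel>a\<parallel>\<^sub>2\<^sup>2 \<parallel>b\<parallel>\<^sub>2\<^sup>2\<close>. With \<open>P = \<parallel>\<cdot>\<parallel>\<^sub>1\<^sup>2\<close> and \<open>Q = \<parallel>\<cdot>\<parallel>\<^sub>2\<^sup>2 \<le> P\<close> the claim
becomes \<open>2 P\<^sub>1 P\<^sub>2 - Q\<^sub>1 Q\<^sub>2 \<le> (2 P\<^sub>1 - Q\<^sub>1)(2 P\<^sub>2 - Q\<^sub>2)\<close>, whose difference is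
\<open>2 (P\<^sub>1 - Q\<^sub>1)(P\<^sub>2 - Q\<^sub>2) \<ge> 0\<close>.\<close>

lemma coeffs_decomp_prod:
  "coeffs (decomp_prod \<Gamma>1 \<Gamma>2) = concat (map (\<lambda>a. map ((*) a) (coeffs \<Gamma>2)) (coeffs \<Gamma>1))"
  by (induction \<Gamma>1) (auto simp: coeffs_def decomp_prod_def case_prod_beta)

lemma sum_list_map_mult_pairs:
  fixes f :: "'a::semiring_0 \<Rightarrow> 'b::comm_semiring_0"
  assumes mult: "\<And>a b. f (a * b) = f a * f b"
  shows "(\<Sum>c\<leftarrow>concat (map (\<lambda>a. map ((*) a) ys) xs). f c)
         = (\<Sum>a\<leftarrow>xs. f a) * (\<Sum>b\<leftarrow>ys. f b)"
proof (induction xs)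
  case Nil
  then show ?case by simp
next
  case (Cons x xs)
  have "(\<Sum>b\<leftarrow>ys. f (x * b)) = f x * (\<Sum>b\<leftarrow>ys. f b)"
    by (simp add: mult sum_list_const_mult)
  with Cons show ?case
    by (simp add: o_def distrib_right)
qed

lemma sum_list_coeffs_decomp_prod_mult:
  assumes "\<And>a b. f (a * b) = f a * f b"
  shows "(\<Sum>c\<leftarrow>coeffs (decomp_prod \<Gamma>1 \<Gamma>2). f c)
         = (\<Sum>c\<leftarrow>coeffs \<Gamma>1. f c) * (\<Sum>c\<leftarrow>coeffs \<Gamma>2. (f c :: real))"
  unfolding coeffs_decomp_prod using assms by (rule sum_list_map_mult_pairs)

lemma sum_list_squares_le_square_sum_abs:
  fixes xs :: "'a::linordered_idom list"
  shows "(\<Sum>c\<leftarrow>xs. c\<^sup>2) \<le> (\<Sum>c\<leftarrow>xs. \<bar>c\<bar>)\<^sup>2"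
proof (induction xs)
  case Nil
  then show ?case by simp
next
  case (Cons x xs)
  have "0 \<le> \<bar>x\<bar> * (\<Sum>c\<leftarrow>xs. \<bar>c\<bar>)"
    by (intro mult_nonneg_nonneg abs_ge_zero sum_list_nonneg) auto
  with Cons show ?case
    by (simp add: power2_eq_square algebra_simps)
qed

lemma two_mult_minus_le_mult_two_minus:
  fixes P1 P2 Q1 Q2 :: "'a::linordered_idom"
  assumes "Q1 \<le> P1" and "Q2 \<le> P2"
  shows "2 * (P1 * P2) - Q1 * Q2 \<le> (2 * P1 - Q1) * (2 * P2 - Q2)"
proof -
  have "0 \<le> 2 * ((P1 - Q1) * (P2 - Q2))"
    using assms by simp
  then show ?thesis
    by (simp add: algebra_simps)
qed

theorem lemma2:
  fixes \<Gamma>1 \<Gamma>2 :: "('a::finite,'b::finite) local_decomp"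
  assumes "local_decomposition \<Gamma>1" and "local_decomposition \<Gamma>2"
  shows "magnitude (decomp_prod \<Gamma>1 \<Gamma>2) \<le> magnitude \<Gamma>1 * magnitude \<Gamma>2"
proof -
  have l1: "(\<Sum>c\<leftarrow>coeffs (decomp_prod \<Gamma>1 \<Gamma>2). \<bar>c\<bar>)
            = (\<Sum>c\<leftarrow>coeffs \<Gamma>1. \<bar>c\<bar>) * (\<Sum>c\<leftarrow>coeffs \<Gamma>2. \<bar>c\<bar>)"
    by (rule sum_list_coeffs_decomp_prod_mult) (simp add: abs_mult)
  have l2: "(\<Sum>c\<leftarrow>coeffs (decomp_prod \<Gamma>1 \<Gamma>2). c\<^sup>2)
            = (\<Sum>c\<leftarrow>coeffs \<Gamma>1. c\<^sup>2) * (\<Sum>c\<leftarrow>coeffs \<Gamma>2. c\<^sup>2)"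
    by (rule sum_list_coeffs_decomp_prod_mult) (simp add: power_mult_distrib)
  show ?thesis
    unfolding magnitude_def l1 l2 power_mult_distrib
    by (intro two_mult_minus_le_mult_two_minus sum_list_squares_le_square_sum_abs)
qed

end
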